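(* Let $A$ be the semi-local highest-score matrix of strings $x$ and $y$, and let $w,r$ be positive integers. A single critical point of the $(w,r)$-restricted highest-score matrix $A^{w,r}$ can be represented using $O(\log(w/r))$ bits, in such a way that all defined entries of $A^{w,r}$ can still be recovered from the stored representation of the critical points.
   Context: Notation: $[i:j] = \{i, \ldots, j\}$ and $\langle i:j\rangle = \{i+\tfrac12, \ldots, j-\tfrac12\}$. The alignment dag of $x = x_1\ldots x_m$ and $y = y_1\ldots y_n$ has vertices $v_{k,l}$, $k\in[0:m]$, $l\in[0:n]$, horizontal and vertical edges of score $0$, and diagonal edges $v_{k-1,l-1}\to v_{k,l}$ of score $1$ present exactly when $x_k=y_l$. The (semi-local) highest-score matrix $A$ has entry $A(i,j)$ equal to the maximum path score from the top boundary at column $i$ to the bottom boundary at column $j$ (the LLCS of $x$ and the corresponding substring of $y$), in Tiskin's semi-local framework. A critical point of $A$ is a pair of odd half-integers $(\hat{\imath},\hat{\jmath})$ with $A(\hat{\imath}+\tfrac12,\hat{\jmath}-\tfrac12)+1 = A(\hat{\imath}-\tfrac12,\hat{\jmath}-\tfrac12) = A(\hat{\imath}+\tfrac12,\hat{\jmath}+\tfrac12) = A(\hat{\imath}-\tfrac12,\hat{\jmath}+\tfrac12)$; its span is $\hat{\jmath}-\hat{\imath}$. Known fact (Tiskin): the critical points form a permutation matrix $D_A$ and $A(i,j) = j-i-\#\{(\hat{\imath},\hat{\jmath}) \text{ critical}: \hat{\imath}>i,\ \hat{\jmath}<j\}$. The $(w,r)$-restricted highest-score matrix is $A^{w,r}(i,j)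 = A(i,j)$ if $j-i\le w$ and $i \bmod r = j \bmod r = 0$, undefined otherwise; its critical points are those of $A$ relevant to these entries (i.e. with span less than $w$). *)

theory Defs
  imports Main
begin

text \<open>Characters of the padded string: y is extended by m wildcards (None) on each side,
  as in Tiskin's semi-local framework.\<close>

definition ext_char :: "'a list \<Rightarrow> int \<Rightarrow> 'a option" where
  "ext_char y l = (if 1 \<le> l \<and> l \<le> int (length y) then Some (y ! nat (l - 1)) else None)"

definition window :: "'a list \<Rightarrow> int \<Rightarrow> int \<Rightarrow> 'a option list" where
  "window y i j = map (ext_char y) [i+1..j]"

definition match :: "'a option \<Rightarrow> 'a option \<Rightarrow> bool" where
  "match a b = (a = None \<or> b = None \<or> a = b)"

fun llcs :: "'a option list \<Rightarrow> 'a option list \<Rightarrow> nat" where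
  "llcs [] ys = 0"
| "llcs xs [] = 0"
| "llcs (a # xs) (b # ys) =
     max (if match a b then llcs xs ys + 1 else 0) (max (llcs (a # xs) ys) (llcs xs (b # ys)))"

text \<open>Semi-local highest-score matrix A(i,j), i in [-m:n], j in [0:m+n];
  A(i,j) = j - i for j < i (Tiskin's convention).\<close>
definition hsm :: "'a list \<Rightarrow> 'a list \<Rightarrow> int \<Rightarrow> int \<Rightarrow> int" where
  "hsm x y i j = (if j < i then j - i else int (llcs (map Some x) (window y i j)))"

definition in_range :: "'a list \<Rightarrow> 'a list \<Rightarrow> int \<Rightarrow> int \<Rightarrow> bool" where
  "in_range x y i j \<longleftrightarrow> - int (length x) \<le> i \<and> i \<le> int (length y)
      \<and> 0 \<le> j \<and> j \<le> int (length x) + int (length y)"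

text \<open>Critical point (p,q) encodes the pair of odd half-integers (p+1/2, q+1/2).\<close>
definition critical :: "'a list \<Rightarrow> 'a list \<Rightarrow> int \<Rightarrow> int \<Rightarrow> bool" where
  "critical x y p q \<longleftrightarrow> in_range x y p q \<and> in_range x y (p+1) (q+1) \<and>
     hsm x y (p+1) q + 1 = hsm x y p q \<and> hsm x y p q = hsm x y (p+1) (q+1) \<and>
     hsm x y (p+1) (q+1) = hsm x y p (q+1)"

definition restr_critical :: "'a list \<Rightarrow> 'a list \<Rightarrow> nat \<Rightarrow> int \<Rightarrow> int \<Rightarrow> bool" where
  "restr_critical x y w p q \<longleftrightarrow> critical x y p q \<and> q - p < int w"

definition restr_defined :: "'a list \<Rightarrow> 'a list \<Rightarrow> nat \<Rightarrow> nat \<Rightarrow> int \<Rightarrow> int \<Rightarrow> bool" where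
  "restr_defined x y w r i j \<longleftrightarrow> in_range x y i j \<and> j - i \<le> int w
      \<and> i mod int r = 0 \<and> j mod int r = 0"

text \<open>Stored representation: an array indexed by the (implicit) position p of the
  critical point's first coordinate, holding the code enc p q of the restricted critical
  point (p,q), or None if there is none.\<close>
definition stored :: "'a list \<Rightarrow> 'a list \<Rightarrow> nat \<Rightarrow> (int \<Rightarrow> int \<Rightarrow> nat) \<Rightarrow> int \<Rightarrow> nat option" where
  "stored x y w enc = (\<lambda>p. if \<exists>q. restr_critical x y w p q
      then Some (enc p (THE q. restr_critical x y w p q)) else None)"

end

theory Submission
  imports Defs
begin

text \<open>The cross differences of A (its density) are 0 or 1 and equal 1 exactly at the
  critical points.  Telescoping them over the rectangle [i, n) \<times> [0, j) and using the
  boundary values of A gives A(i, j) = j - i - #{critical (p, q) : p \<ge> i, q < j}.  Each row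
  sum of the density is 1, so row p holds exactly one critical point q, and q \<ge> p.
  For a defined entry of A^{w,r} it only matters whether q < j, and since r divides j this
  is q div r < j div r; since also r divides i and j - i \<le> w, it suffices to store in row p
  the block offset q div r - p div r capped at w div r + 1, a number below 2 (w/r + 1).\<close>

lemma llcs_Nil2 [simp]: "llcs xs [] = 0"
  by (cases xs) auto

lemma llcs_le_length_left: "llcs xs ys \<le> length xs"
  by (induction xs ys rule: llcs.induct) auto

lemma llcs_le_length_right: "llcs xs ys \<le> length ys"
  by (induction xs ys rule: llcs.induct) auto

lemma llcs_Cons_left_mono: "llcs xs ys \<le> llcs (a # xs) ys"
  by (cases ys) auto

lemma llcs_Cons_right_mono: "llcs xs ys \<le> llcs xs (c # ys)"
  by (cases xs) auto

lemma llcs_Cons_right_le_Suc: "llcs xs (c # ys) \<le> llcs xs ys + 1"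
proof (induction xs arbitrary: ys)
  case (Cons a xs)
  show ?case
    using Cons.IH[of ys] llcs_Cons_left_mono[of xs ys a] by (auto simp: max_def)
qed simp

lemma llcs_snoc_mono: "llcs xs ys \<le> llcs xs (ys @ [d])"
  by (induction xs ys rule: llcs.induct) (auto simp: max_def)

lemma llcs_snoc_le_Suc: "llcs xs (ys @ [d]) \<le> llcs xs ys + 1"
proof (induction xs ys rule: llcs.induct)
  case (2 a xs)
  then show ?case using llcs_le_length_right[of "a # xs" "[d]"] by simp
qed (auto simp: max_def)

lemma llcs_append_left_mono: "llcs xs t \<le> llcs xs (s @ t)"
  by (induction s) (auto intro: order_trans[OF _ llcs_Cons_right_mono])

lemma llcs_Cons_Cons_cases:
  obtains "match a c" "llcs (a # xs) (c # ys) = llcs xs ys + 1"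
  | "llcs (a # xs) (c # ys) = llcs (a # xs) ys"
  | "llcs (a # xs) (c # ys) = llcs xs (c # ys)"
proof -
  have "match a c \<and> llcs (a # xs) (c # ys) = llcs xs ys + 1
      \<or> llcs (a # xs) (c # ys) = llcs (a # xs) ys \<or> llcs (a # xs) (c # ys) = llcs xs (c # ys)"
    by (auto simp: max_def)
  with that show thesis by blast
qed

lemma llcs_replicate_None: "llcs xs (replicate k None) = min (length xs) k"
proof (induction xs arbitrary: k)
  case (Cons a xs)
  show ?case
  proof (cases k)
    case (Suc k')
    have "llcs (a # xs) (replicate k' None) \<le> Suc (min (length xs) k')"
      using llcs_le_length_left[of "a # xs"] llcs_le_length_right[of "a # xs" "replicate k' None"]
      by (simp add: min_def)
    moreover have "llcs xs (None # replicate k' None) \<le> Suc (min (length xs) k')"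
      using llcs_le_length_left[of xs] llcs_le_length_right[of xs "None # replicate k' None"]
      by (simp add: min_def) (meson le_SucI)
    ultimately show ?thesis
      using Suc Cons.IH[of k'] by (simp add: match_def)
  qed simp
qed simp

text \<open>The induction proving the Monge property of llcs needs this mixed inequality, in which
  the first string grows at the front while the second grows at the back.\<close>

lemma llcs_monge_Cons_snoc:
  assumes monge: "\<And>c w d. llcs xs w + llcs xs (c # w @ [d]) \<le> llcs xs (c # w) + llcs xs (w @ [d])"
  shows "llcs (a # xs) w + llcs xs (w @ [d]) \<le> llcs xs w + llcs (a # xs) (w @ [d])"
proof (induction w)
  case Nil
  show ?case using llcs_Cons_left_mono[of xs "[d]" a] by simp
next
  case (Cons c w)
  have "llcs (a # xs) (w @ [d]) \<le> llcs (a # xs) (c # w @ [d])"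
    and "llcs xs (c # w @ [d]) \<le> llcs (a # xs) (c # w @ [d])"
    and "match a c \<Longrightarrow> llcs xs (w @ [d]) + 1 \<le> llcs (a # xs) (c # w @ [d])"
    by (simp_all add: llcs_Cons_right_mono llcs_Cons_left_mono)
  with Cons.IH monge[where c=c and w=w and d=d] show ?case
    by (cases rule: llcs_Cons_Cons_cases[of a c xs w]) simp_all
qed

lemma llcs_monge: "llcs xs w + llcs xs (c # w @ [d]) \<le> llcs xs (c # w) + llcs xs (w @ [d])"
proof (induction xs arbitrary: c w d)
  case (Cons a xs)
  have "llcs (a # xs) w + llcs xs (w @ [d]) \<le> llcs xs w + llcs (a # xs) (w @ [d])"
    using llcs_monge_Cons_snoc[OF Cons.IH] .
  moreover have "llcs (a # xs) w \<le> llcs (a # xs) (c # w)"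
    and "llcs xs (c # w) \<le> llcs (a # xs) (c # w)"
    and "match a c \<Longrightarrow> llcs xs w + 1 \<le> llcs (a # xs) (c # w)"
    by (simp_all add: llcs_Cons_right_mono llcs_Cons_left_mono)
  ultimately show ?case
    using Cons.IH[where c=c and w=w and d=d]
    by (cases rule: llcs_Cons_Cons_cases[of a c xs "w @ [d]"]) simp_all
qed simp

lemma window_empty: "j \<le> i \<Longrightarrow> window y i j = []"
  by (simp add: window_def)

lemma window_snoc: "i \<le> j \<Longrightarrow> window y i (j + 1) = window y i j @ [ext_char y (j + 1)]"
  unfolding window_def using upto_rec2[of "i + 1" "j + 1"] by simp

lemma window_Cons: "i < j \<Longrightarrow> window y i j = ext_char y (i + 1) # window y (i + 1) j"
  unfolding window_def using upto_rec1[of "i + 1" j] by simp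

lemma window_append: "i \<le> k \<Longrightarrow> k \<le> j \<Longrightarrow> window y i j = window y i k @ window y k j"
proof (cases "k = i")
  case False
  assume "i \<le> k" "k \<le> j"
  with False show ?thesis using upto_split2[of "i + 1" k j] unfolding window_def by simp
qed (simp add: window_empty)

lemma window_outside:
  assumes "j \<le> 0 \<or> int (length y) \<le> i"
  shows "window y i j = replicate (nat (j - i)) None"
proof -
  have "window y i j = map (\<lambda>_. None) [i + 1..j]"
    unfolding window_def using assms by (intro map_cong) (auto simp: ext_char_def)
  then show ?thesis by (simp add: map_replicate_const)
qed

lemma hsm_below_diag: "j \<le> i \<Longrightarrow> hsm x y i j = j - i"
  by (cases "j = i") (simp_all add: hsm_def window_empty)

lemma hsm_right_step: "hsm x y i j \<le> hsm x y i (j + 1) \<and> hsm x y i (j + 1) \<le> hsm x y i j + 1"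
proof (cases "i \<le> j")
  case True
  then show ?thesis
    using llcs_snoc_mono[of "map Some x" "window y i j" "ext_char y (j + 1)"]
      llcs_snoc_le_Suc[of "map Some x" "window y i j" "ext_char y (j + 1)"]
    by (simp add: hsm_def window_snoc)
qed (simp add: hsm_below_diag)

lemma hsm_left_step: "hsm x y (i + 1) j \<le> hsm x y i j \<and> hsm x y i j \<le> hsm x y (i + 1) j + 1"
proof (cases "i < j")
  case True
  then show ?thesis
    using llcs_Cons_right_mono[of "map Some x" "window y (i + 1) j" "ext_char y (i + 1)"]
      llcs_Cons_right_le_Suc[of "map Some x" "ext_char y (i + 1)" "window y (i + 1) j"]
    by (simp add: hsm_def window_Cons)
qed (simp add: hsm_below_diag)

lemma hsm_monge:
  "hsm x y (i + 1) j + hsm x y i (j + 1) \<le> hsm x y i j + hsm x y (i + 1) (j + 1)"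
proof (cases "i < j")
  case True
  let ?w = "window y (i + 1) j" and ?c = "ext_char y (i + 1)" and ?d = "ext_char y (j + 1)"
  have "window y i j = ?c # ?w" "window y (i + 1) (j + 1) = ?w @ [?d]"
    "window y i (j + 1) = ?c # ?w @ [?d]"
    using True window_Cons[of i j y] window_Cons[of i "j + 1" y] window_snoc[of "i + 1" j y]
    by simp_all
  with True show ?thesis
    using llcs_monge[of "map Some x" ?w ?c ?d] by (simp add: hsm_def)
next
  case False
  then consider "j = i" | "j + 1 \<le> i" by linarith
  then show ?thesis
    by cases (use hsm_right_step[of x y i i] in \<open>simp_all add: hsm_below_diag\<close>)
qed

lemma hsm_top_boundary: "- int (length x) \<le> i \<Longrightarrow> hsm x y i 0 = - i"
  by (cases "i \<le> 0") (auto simp: hsm_def window_outside llcs_replicate_None)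

lemma hsm_bottom_boundary:
  "j \<le> int (length x) + int (length y) \<Longrightarrow> hsm x y (int (length y)) j = j - int (length y)"
  by (cases "int (length y) \<le> j") (auto simp: hsm_def window_outside llcs_replicate_None)

lemma hsm_full_width:
  assumes "- int (length x) \<le> i" "i \<le> int (length y)"
  shows "hsm x y i (int (length x) + int (length y)) = int (length x)"
proof -
  let ?n = "int (length y)" and ?N = "int (length x) + int (length y)"
  have "window y i ?N = window y i ?n @ replicate (length x) None"
    using assms window_append[of i ?n ?N y] window_outside[of ?N y ?n] by simp
  then have "length x \<le> llcs (map Some x) (window y i ?N)"
    using llcs_append_left_mono[of "map Some x" "replicate (length x) None" "window y i ?n"]
    by (simp add: llcs_replicate_None)
  moreover have "llcs (map Some x) (window y i ?N) \<le> length x"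
    using llcs_le_length_left[of "map Some x"] by simp
  ultimately show ?thesis using assms by (simp add: hsm_def)
qed

definition density :: "'a list \<Rightarrow> 'a list \<Rightarrow> int \<Rightarrow> int \<Rightarrow> int" where
  "density x y p q = hsm x y p q + hsm x y (p + 1) (q + 1) - hsm x y (p + 1) q - hsm x y p (q + 1)"

lemma critical_in_range:
  "critical x y p q \<Longrightarrow>
    - int (length x) \<le> p \<and> p < int (length y) \<and> 0 \<le> q \<and> q < int (length x) + int (length y)"
  unfolding critical_def in_range_def by auto

lemma density_eq_of_bool_critical:
  assumes "- int (length x) \<le> p" "p < int (length y)" "0 \<le> q" "q < int (length x) + int (length y)"
  shows "density x y p q = of_bool (critical x y p q)"
  using assms hsm_monge[of x y p q] hsm_right_step[of x y p q] hsm_right_step[of x y "p + 1" q]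
    hsm_left_step[of x y p q] hsm_left_step[of x y p "q + 1"]
  unfolding critical_def in_range_def density_def by auto

lemma critical_le: "critical x y p q \<Longrightarrow> p \<le> q"
  using hsm_below_diag[of q p x y] hsm_below_diag[of "q + 1" "p + 1" x y]
    hsm_below_diag[of q "p + 1" x y] hsm_below_diag[of "q + 1" p x y]
  unfolding critical_def by (cases "q + 1 \<le> p") auto

lemma sum_int_atLeastLessThan_telescope:
  fixes f :: "int \<Rightarrow> 'b::ab_group_add"
  assumes "i \<le> k"
  shows "(\<Sum>p\<in>{i..<k}. f p - f (p + 1)) = f i - f k"
  using assms
proof (induction k rule: int_ge_induct)
  case (step k)
  have "{i..<k + 1} = insert k {i..<k}" using step.hyps by auto
  with step show ?case by simp
qed simp

lemma sum_cross_diff_rectangle: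
  fixes F :: "int \<Rightarrow> int \<Rightarrow> 'b::ab_group_add"
  assumes "i \<le> i'" "k \<le> k'"
  shows "(\<Sum>p\<in>{i..<i'}. \<Sum>q\<in>{k..<k'}. F p q + F (p + 1) (q + 1) - F (p + 1) q - F p (q + 1))
    = F i k + F i' k' - F i' k - F i k'"
proof -
  have inner: "(\<Sum>q\<in>{k..<k'}. F p q + F (p + 1) (q + 1) - F (p + 1) q - F p (q + 1))
      = (F p k - F p k') - (F (p + 1) k - F (p + 1) k')" for p
    using sum_int_atLeastLessThan_telescope[OF assms(2), of "\<lambda>q. F p q - F (p + 1) q"]
    by (simp add: algebra_simps)
  have "(\<Sum>p\<in>{i..<i'}. (F p k - F p k') - (F (p + 1) k - F (p + 1) k'))
      = (F i k - F i k') - (F i' k - F i' k')"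
    by (rule sum_int_atLeastLessThan_telescope[OF assms(1)])
  then show ?thesis unfolding inner by (simp add: algebra_simps)
qed

definition dominated_critical :: "'a list \<Rightarrow> 'a list \<Rightarrow> int \<Rightarrow> int \<Rightarrow> (int \<times> int) set" where
  "dominated_critical x y i j = {(p, q). i \<le> p \<and> q < j \<and> critical x y p q}"

lemma hsm_eq_card_dominated_critical:
  assumes "in_range x y i j"
  shows "hsm x y i j = j - i - int (card (dominated_critical x y i j))"
proof -
  let ?n = "int (length y)" and ?R = "{i..<int (length y)} \<times> {0..<j}"
  have range: "- int (length x) \<le> i" "i \<le> ?n" "0 \<le> j" "j \<le> int (length x) + ?n"
    using assms by (auto simp: in_range_def)
  have "dominated_critical x y i j = ?R \<inter> {(p, q). critical x y p q}"
    by (auto simp: dominated_critical_def dest: critical_in_range)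
  then have "int (card (dominated_critical x y i j)) = (\<Sum>(p, q)\<in>?R. of_bool (critical x y p q))"
    by (simp add: sum_of_bool_eq split_def)
  also have "\<dots> = (\<Sum>(p, q)\<in>?R. density x y p q)"
    using range by (intro sum.cong) (auto simp: density_eq_of_bool_critical)
  also have "\<dots> = (\<Sum>p\<in>{i..<?n}. \<Sum>q\<in>{0..<j}. density x y p q)"
    by (simp add: sum.cartesian_product)
  also have "\<dots> = hsm x y i 0 + hsm x y ?n j - hsm x y ?n 0 - hsm x y i j"
    unfolding density_def using range by (intro sum_cross_diff_rectangle) auto
  also have "\<dots> = j - i - hsm x y i j"
    using range by (simp add: hsm_top_boundary hsm_bottom_boundary)
  finally show ?thesis by simp
qed

lemma critical_row_unique:
  assumes "critical x y p q" "critical x y p q'"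
  shows "q = q'"
proof -
  let ?N = "int (length x) + int (length y)"
  have range: "- int (length x) \<le> p" "p < int (length y)"
    using critical_in_range[OF assms(1)] by auto
  have "int (card ({0..<?N} \<inter> {q. critical x y p q})) = (\<Sum>q\<in>{0..<?N}. of_bool (critical x y p q))"
    by (simp add: sum_of_bool_eq)
  also have "\<dots> = (\<Sum>q\<in>{0..<?N}. density x y p q)"
    using range by (intro sum.cong) (simp_all add: density_eq_of_bool_critical)
  also have "\<dots> = (hsm x y p 0 - hsm x y (p + 1) 0) - (hsm x y p ?N - hsm x y (p + 1) ?N)"
    using sum_int_atLeastLessThan_telescope[of 0 ?N "\<lambda>q. hsm x y p q - hsm x y (p + 1) q"]
    unfolding density_def by (simp add: algebra_simps)
  also have "\<dots> = 1"
    using range by (simp add: hsm_top_boundary hsm_full_width)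
  finally have "card ({0..<?N} \<inter> {q. critical x y p q}) = 1" by simp
  moreover have "q \<in> {0..<?N} \<inter> {q. critical x y p q}" "q' \<in> {0..<?N} \<inter> {q. critical x y p q}"
    using assms critical_in_range[OF assms(1)] critical_in_range[OF assms(2)] by auto
  ultimately show ?thesis by (metis card_1_singletonE singletonD)
qed

lemma stored_eq_Some_iff:
  "stored x y w enc p = Some e \<longleftrightarrow> (\<exists>q. restr_critical x y w p q \<and> e = enc p q)"
proof -
  have "(THE q. restr_critical x y w p q) = q" if "restr_critical x y w p q" for q
    using that critical_row_unique[of x y p q] unfolding restr_critical_def
    by (intro the_equality) blast+
  then show ?thesis by (auto simp: stored_def)
qed

lemma zdiv_less_zdiv_iff_of_dvd:
  fixes q j r :: int
  assumes "0 < r" "r dvd j"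
  shows "q div r < j div r \<longleftrightarrow> q < j"
proof
  assume "q < j"
  moreover have "q div r * r \<le> q"
    using div_mult_mod_eq[of q r] pos_mod_sign[OF assms(1), of q] by linarith
  moreover have "j div r * r = j"
    using assms(2) by simp
  ultimately have "q div r * r < j div r * r" by linarith
  with assms(1) show "q div r < j div r" by simp
qed (meson assms(1) not_less zdiv_mono1)

definition block_span_code :: "nat \<Rightarrow> nat \<Rightarrow> int \<Rightarrow> int \<Rightarrow> nat" where
  "block_span_code w r p q = min (nat (q div int r - p div int r)) (w div r + 1)"

definition decode_hsm :: "nat \<Rightarrow> (int \<Rightarrow> nat option) \<Rightarrow> int \<Rightarrow> int \<Rightarrow> int" where
  "decode_hsm r code i j =
     j - i - int (card {p \<in> {i..<j}. \<exists>e. code p = Some e \<and> int e < j div int r - p div int r})"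

lemma decoded_rows_eq_dominated:
  assumes "0 < r" "restr_defined x y w r i j"
  shows "{p \<in> {i..<j}. \<exists>e. stored x y w (block_span_code w r) p = Some e
                          \<and> int e < j div int r - p div int r}
    = fst ` dominated_critical x y i j" (is "?D = _")
proof -
  have r: "0 < int r" using assms(1) by simp
  have ij: "j - i \<le> int w" "int r dvd i" "int r dvd j"
    using assms(2) unfolding restr_defined_def by (auto intro: mod_0_imp_dvd)
  have span: "j div int r - i div int r \<le> int (w div r)"
    using zdiv_mono1[OF ij(1) r] by (simp add: div_diff[OF ij(3) ij(2)] zdiv_int)
  have "p \<in> ?D \<longleftrightarrow> (\<exists>q. (p, q) \<in> dominated_critical x y i j)" for p
  proof
    assume "p \<in> ?D"
    then obtain q where p: "i \<le> p" "p < j" and q: "critical x y p q"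
      and less: "int (block_span_code w r p q) < j div int r - p div int r"
      by (auto simp: stored_eq_Some_iff restr_critical_def)
    have "q < j"
    proof (rule ccontr)
      assume "\<not> q < j"
      then have "j div int r - p div int r \<le> q div int r - p div int r"
        using zdiv_mono1[of j q "int r"] r by simp
      moreover have "j div int r - p div int r \<le> int (w div r)"
        using span zdiv_mono1[OF p(1) r] by simp
      ultimately show False
        using less by (simp add: block_span_code_def)
    qed
    with p q show "\<exists>q. (p, q) \<in> dominated_critical x y i j"
      by (auto simp: dominated_critical_def)
  next
    assume "\<exists>q. (p, q) \<in> dominated_critical x y i j"
    then obtain q where p: "i \<le> p" and q: "q < j" "critical x y p q"
      by (auto simp: dominated_critical_def)
    have "p \<le> q" using critical_le[OF q(2)] .
    have "q div int r < j div int r"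
      using zdiv_less_zdiv_iff_of_dvd[OF r ij(3)] q(1) by blast
    with zdiv_mono1[OF \<open>p \<le> q\<close> r]
    have "int (block_span_code w r p q) < j div int r - p div int r"
      by (auto simp: block_span_code_def min_def)
    moreover have "restr_critical x y w p q"
      using \<open>p \<le> q\<close> p q ij(1) by (simp add: restr_critical_def)
    ultimately show "p \<in> ?D"
      using p q \<open>p \<le> q\<close> by (auto simp: stored_eq_Some_iff)
  qed
  then show ?thesis by force
qed

lemma decode_hsm_stored:
  assumes "0 < r" "restr_defined x y w r i j"
  shows "decode_hsm r (stored x y w (block_span_code w r)) i j = hsm x y i j"
proof -
  have "inj_on fst (dominated_critical x y i j)"
    by (auto simp: inj_on_def dominated_critical_def intro: critical_row_unique)
  then have "card (fst ` dominated_critical x y i j) = card (dominated_critical x y i j)"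
    by (rule card_image)
  moreover have "in_range x y i j"
    using assms(2) by (simp add: restr_defined_def)
  ultimately show ?thesis
    unfolding decode_hsm_def decoded_rows_eq_dominated[OF assms]
    by (simp add: hsm_eq_card_dominated_critical)
qed

theorem proposition2:
  "\<exists>C::nat. \<forall>w r::nat. 0 < w \<longrightarrow> 0 < r \<longrightarrow>
     (\<exists>(enc :: int \<Rightarrow> int \<Rightarrow> nat) (dec :: nat \<Rightarrow> nat \<Rightarrow> (int \<Rightarrow> nat option) \<Rightarrow> int \<Rightarrow> int \<Rightarrow> int).
        (\<forall>p q. enc p q < C * (w div r + 1)) \<and>
        (\<forall>(x :: 'a list) (y :: 'a list) i j. restr_defined x y w r i j \<longrightarrow>
            dec (length x) (length y) (stored x y w enc) i j = hsm x y i j))"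
proof (intro exI allI impI conjI)
  fix w r :: nat
  assume "0 < r"
  show "block_span_code w r p q < 2 * (w div r + 1)" for p q
    by (simp add: block_span_code_def)
  show "(\<lambda>_ _. decode_hsm r) (length x) (length y) (stored x y w (block_span_code w r)) i j
      = hsm x y i j" if "restr_defined x y w r i j" for x y :: "'a list" and i j
    using decode_hsm_stored[OF \<open>0 < r\<close> that] by simp
qed

end
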